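(* If $\frac12<p\le t\le\frac23$, then bold play is not optimal, i.e. $\pi(p,t)>p$.
   Context: Let $\beta_1,\beta_2,\ldots$ be independent Bernoulli random variables with success probability $p$. A stake sequence is a sequence $\gamma=(c_1,c_2,\ldots)$ of non-negative reals with $c_1\ge c_2\ge\cdots$ and $\sum_i c_i=1$; write $S_\gamma=\sum_i c_i\beta_i$. For $0\le p\le t\le 1$ define $\pi(p,t)=\sup\{\mathbf P(S_\gamma\ge t)\mid \gamma \text{ a stake sequence}\}$. Bold play for threshold $t$ is the stake sequence with $c_i=\frac1m$ for $i\le m$ and $c_i=0$ for $i>m$, where $m=\lfloor 1/t\rfloor$; it is optimal if it attains $\pi(p,t)$. For $t>\frac12$ bold play is $c_1=1$, with success probability $p$. *)

theory Defs
  imports "HOL-Probability.Probability"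
begin

text \<open>Independent Bernoulli(p) variables beta_1, beta_2, ... realised as coordinates of the
infinite product space (indices shifted to start at 0).\<close>
definition bern_space :: "real \<Rightarrow> (nat \<Rightarrow> bool) measure" where
  "bern_space p = PiM UNIV (\<lambda>_. measure_pmf (bernoulli_pmf p))"

definition stake_seq :: "(nat \<Rightarrow> real) \<Rightarrow> bool" where
  "stake_seq c \<longleftrightarrow> (\<forall>i. 0 \<le> c i) \<and> antimono c \<and> c sums 1"

definition S_gamma :: "(nat \<Rightarrow> real) \<Rightarrow> (nat \<Rightarrow> bool) \<Rightarrow> real" where
  "S_gamma c \<omega> = (\<Sum>i. c i * (if \<omega> i then 1 else 0))"

definition succ_prob :: "real \<Rightarrow> real \<Rightarrow> (nat \<Rightarrow> real) \<Rightarrow> real" where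
  "succ_prob p t c = measure (bern_space p) {\<omega> \<in> space (bern_space p). S_gamma c \<omega> \<ge> t}"

definition pi_opt :: "real \<Rightarrow> real \<Rightarrow> real" where
  "pi_opt p t = Sup {succ_prob p t c | c. stake_seq c}"

end

theory Submission
  imports Defs
begin

text \<open>Stake 1/3 on each of the first three trials. Since \<open>1/3 < t \<le> 2/3\<close>, the threshold is
reached exactly when at least two of the three trials succeed, which happens with probability
\<open>p\<^sup>2 (3 - 2p) = p + p (2p - 1) (1 - p)\<close>; for \<open>1/2 < p < 1\<close> this exceeds the success
probability \<open>p\<close> of bold play.\<close>

lemma prob_space_bern_space: "prob_space (bern_space p)"
  unfolding bern_space_def by (rule prob_space_PiM) (simp add: prob_space_measure_pmf)

lemma space_bern_space [simp]: "space (bern_space p) = UNIV"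
  unfolding bern_space_def by (simp add: space_PiM)

lemma measure_bern_space_cylinder:
  assumes "finite I"
  shows "measure (bern_space p) {\<omega>. \<forall>i\<in>I. \<omega> i = b i} = (\<Prod>i\<in>I. pmf (bernoulli_pmf p) (b i))"
proof -
  interpret product_prob_space "\<lambda>_::nat. measure_pmf (bernoulli_pmf p)" UNIV
    by unfold_locales
  have "emeasure (bern_space p) {\<omega>. \<forall>i\<in>I. \<omega> i \<in> {b i}}
      = (\<Prod>i\<in>I. emeasure (measure_pmf (bernoulli_pmf p)) {b i})"
    using emeasure_PiM_Collect[OF _ assms, of "\<lambda>i. {b i}"]
    by (simp add: bern_space_def space_PiM)
  then show ?thesis
    by (simp add: measure_def emeasure_pmf_single prod_ennreal prod_nonneg)
qed

lemma measure_bern_space_two_of_three: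
  assumes "0 \<le> p" "p \<le> 1"
  shows "measure (bern_space p) {\<omega>. (\<omega> 0 \<and> \<omega> 1) \<or> (\<omega> 0 \<and> \<omega> 2) \<or> (\<omega> 1 \<and> \<omega> 2)}
       = p\<^sup>2 * (3 - 2 * p)"
proof -
  interpret prob_space "bern_space p" by (rule prob_space_bern_space)
  define cyl :: "bool \<times> bool \<times> bool \<Rightarrow> (nat \<Rightarrow> bool) set" where
    "cyl = (\<lambda>(a, b, d). {\<omega>. \<omega> 0 = a \<and> \<omega> 1 = b \<and> \<omega> 2 = d})"
  define W where "W = {(True, True, True), (True, True, False), (True, False, True), (False, True, True)}"
  have cyl_events: "cyl w \<in> events" for w
  proof -
    have "Measurable.pred (bern_space p) (\<lambda>\<omega>. \<omega> 0 = a \<and> \<omega> 1 = b \<and> \<omega> 2 = d)" for a b d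
      unfolding bern_space_def by measurable
    then show ?thesis by (cases w) (simp add: cyl_def pred_def)
  qed
  have prob_cyl: "prob (cyl (a, b, d))
      = pmf (bernoulli_pmf p) a * pmf (bernoulli_pmf p) b * pmf (bernoulli_pmf p) d" for a b d
    using measure_bern_space_cylinder[of "{0, 1, 2}" p "\<lambda>i. if i = 0 then a else if i = 1 then b else d"]
    by (simp add: cyl_def)
  have "{\<omega>. (\<omega> 0 \<and> \<omega> 1) \<or> (\<omega> 0 \<and> \<omega> 2) \<or> (\<omega> 1 \<and> \<omega> 2)} = (\<Union>w\<in>W. cyl w)"
    by (auto simp: W_def cyl_def)
  also have "prob \<dots> = (\<Sum>w\<in>W. prob (cyl w))"
    by (rule finite_measure_finite_Union)
       (auto simp: W_def cyl_events, auto simp: W_def disjoint_family_on_def cyl_def)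
  also have "\<dots> = p\<^sup>2 * (3 - 2 * p)"
    using assms by (simp add: W_def prob_cyl power2_eq_square algebra_simps)
  finally show ?thesis .
qed

definition equal_stakes :: "nat \<Rightarrow> nat \<Rightarrow> real" where
  "equal_stakes m i = (if i < m then 1 / m else 0)"

lemma stake_seq_equal_stakes:
  assumes "0 < m"
  shows "stake_seq (equal_stakes m)"
  unfolding stake_seq_def
proof (intro conjI)
  show "\<forall>i. 0 \<le> equal_stakes m i"
    by (simp add: equal_stakes_def)
  show "antimono (equal_stakes m)"
    by (auto simp: antimono_def equal_stakes_def)
  have "equal_stakes m sums (\<Sum>i<m. equal_stakes m i)"
    by (rule sums_finite) (auto simp: equal_stakes_def)
  then show "equal_stakes m sums 1"
    using assms by (simp add: equal_stakes_def)
qed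

lemma S_gamma_equal_stakes:
  "S_gamma (equal_stakes m) \<omega> = (\<Sum>i<m. of_bool (\<omega> i)) / m"
proof -
  have "S_gamma (equal_stakes m) \<omega> = (\<Sum>i<m. equal_stakes m i * (if \<omega> i then 1 else 0))"
    unfolding S_gamma_def by (rule suminf_finite) (auto simp: equal_stakes_def)
  then show ?thesis
    by (simp add: equal_stakes_def sum_divide_distrib of_bool_def)
qed

lemma succ_prob_le_pi_opt:
  assumes "stake_seq c"
  shows "succ_prob p t c \<le> pi_opt p t"
  unfolding pi_opt_def
proof (rule cSup_upper)
  show "succ_prob p t c \<in> {succ_prob p t c |c. stake_seq c}"
    using assms by blast
  interpret prob_space "bern_space p" by (rule prob_space_bern_space)
  show "bdd_above {succ_prob p t c |c. stake_seq c}"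
    by (rule bdd_aboveI[of _ 1]) (auto simp: succ_prob_def)
qed

lemma succ_prob_three_equal_stakes:
  assumes "0 \<le> p" "p \<le> 1" "1/3 < t" "t \<le> 2/3"
  shows "succ_prob p t (equal_stakes 3) = p\<^sup>2 * (3 - 2 * p)"
proof -
  have "t \<le> S_gamma (equal_stakes 3) \<omega> \<longleftrightarrow> (\<omega> 0 \<and> \<omega> 1) \<or> (\<omega> 0 \<and> \<omega> 2) \<or> (\<omega> 1 \<and> \<omega> 2)" for \<omega>
    using assms(3,4)
    by (simp add: S_gamma_equal_stakes numeral_3_eq_3 numeral_2_eq_2 lessThan_Suc of_bool_def)
  then show ?thesis
    using measure_bern_space_two_of_three[OF assms(1,2)] by (simp add: succ_prob_def)
qed

theorem corollary17:
  fixes p t :: real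
  assumes "1/2 < p" and "p \<le> t" and "t \<le> 2/3"
  shows "pi_opt p t > p"
proof -
  have "p\<^sup>2 * (3 - 2 * p) - p = p * (2 * p - 1) * (1 - p)"
    by (simp add: power2_eq_square algebra_simps)
  also have "\<dots> > 0"
    using assms by (auto intro!: mult_pos_pos)
  finally have "p < succ_prob p t (equal_stakes 3)"
    using assms by (simp add: succ_prob_three_equal_stakes)
  also have "\<dots> \<le> pi_opt p t"
    by (simp add: succ_prob_le_pi_opt stake_seq_equal_stakes)
  finally show ?thesis .
qed

end
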